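(* Let $a,b,c\in\mathbb{R}$ and let $(u(\tau),v(\tau),w(\tau))$ be a solution, with $u,v,w$ pairwise distinct, of $$u'=\frac{c}{u-v}+\frac{b}{u-w},\quad v'=\frac{a}{v-w}+\frac{c}{v-u},\quad w'=\frac{b}{w-u}+\frac{a}{w-v}.$$ Set $\zeta=\frac{1}{\sqrt3}(u+v+w)$, $\eta=\frac{1}{\sqrt2}(u-v)$, $\xi=\frac1{\sqrt6}(u+v-2w)$. Then $\zeta$ is constant along the solution and $$\eta'=\frac{c}{\eta}+\frac{b}{\sqrt3\,\xi+\eta}-\frac{a}{\sqrt3\,\xi-\eta},\qquad \xi'=\sqrt3\Big(\frac{b}{\sqrt3\,\xi+\eta}+\frac{a}{\sqrt3\,\xi-\eta}\Big).$$ Moreover this planar system is a gradient system: $(\eta',\xi')=(\partial_\eta \tilde F,\partial_\xi \tilde F)$ with $\tilde F(\eta,\xi)=c\ln|\eta|+b\ln|\sqrt3\,\xi+\eta|+a\ln|\sqrt3\,\xi-\eta|$.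
   Context: Prime denotes derivative with respect to the (real) time variable $\tau$. *)

theory Defs
  imports "HOL-Analysis.Analysis"
begin

definition Ftilde :: "real \<Rightarrow> real \<Rightarrow> real \<Rightarrow> real \<Rightarrow> real \<Rightarrow> real" where
  "Ftilde a b c e x = c * ln \<bar>e\<bar> + b * ln \<bar>sqrt 3 * x + e\<bar> + a * ln \<bar>sqrt 3 * x - e\<bar>"

end

theory Submission
  imports Defs
begin

text \<open>The pairwise interaction terms of \<open>u' + v' + w'\<close> cancel, so \<open>\<zeta>\<close> is constant. Since
  \<open>\<surd>3 \<xi> + \<eta> = \<surd>2 (u - w)\<close> and \<open>\<surd>3 \<xi> - \<eta> = \<surd>2 (v - w)\<close>, the linear combinations
  \<open>\<eta>'\<close> and \<open>\<xi>'\<close> of \<open>u', v', w'\<close> become the stated planar field, which is the gradient of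
  \<open>F\<close> because \<open>(ln \<bar>y\<bar>)' = 1 / y\<close>.\<close>

lemma divide_diff_swap: "x / (q - p) = - (x / (p - q))" for x p q :: real
  by (metis minus_diff_eq divide_minus_right)

lemma calogero_velocity_sum_zero:
  fixes a b c u v w :: real
  shows "(c / (u - v) + b / (u - w)) + (a / (v - w) + c / (v - u)) + (b / (w - u) + a / (w - v)) = 0"
  by (simp add: divide_diff_swap[of c v u] divide_diff_swap[of b w u] divide_diff_swap[of a w v])

lemma jacobi_coordinates_combinations:
  fixes u v w :: real
  shows "sqrt 3 * ((u + v - 2 * w) / sqrt 6) + (u - v) / sqrt 2 = sqrt 2 * (u - w)"
    and "sqrt 3 * ((u + v - 2 * w) / sqrt 6) - (u - v) / sqrt 2 = sqrt 2 * (v - w)"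
proof -
  have "sqrt 6 = sqrt 2 * sqrt 3" by (simp add: real_sqrt_mult[symmetric])
  then have "sqrt 3 * ((u + v - 2 * w) / sqrt 6) = (u + v - 2 * w) / sqrt 2" by simp
  moreover have "2 / sqrt 2 = sqrt 2" by (simp add: divide_eq_eq)
  ultimately show "sqrt 3 * ((u + v - 2 * w) / sqrt 6) + (u - v) / sqrt 2 = sqrt 2 * (u - w)"
    and "sqrt 3 * ((u + v - 2 * w) / sqrt 6) - (u - v) / sqrt 2 = sqrt 2 * (v - w)"
    by (simp_all add: diff_divide_distrib add_divide_distrib) (simp_all add: field_simps)
qed

text \<open>The two velocity identities need no distinctness hypothesis: where a denominator vanishes,
  both sides degenerate in the same way under \<open>x / 0 = 0\<close>.\<close>

lemma calogero_eta_velocity: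
  fixes a b c u v w :: real
  shows "((c / (u - v) + b / (u - w)) - (a / (v - w) + c / (v - u))) / sqrt 2
    = c / ((u - v) / sqrt 2) + b / (sqrt 2 * (u - w)) - a / (sqrt 2 * (v - w))"
proof -
  have "c / ((u - v) / sqrt 2) = 2 * c / (u - v) / sqrt 2"
    by (simp add: divide_simps)
  then show ?thesis
    by (simp add: divide_diff_swap[of c v u] add_divide_distrib diff_divide_distrib mult.commute)
qed

lemma calogero_xi_velocity:
  fixes a b c u v w :: real
  shows "((c / (u - v) + b / (u - w)) + (a / (v - w) + c / (v - u)) - 2 * (b / (w - u) + a / (w - v))) / sqrt 6
    = sqrt 3 * (b / (sqrt 2 * (u - w)) + a / (sqrt 2 * (v - w)))"
proof -
  have "sqrt 6 = sqrt 2 * sqrt 3" by (simp add: real_sqrt_mult[symmetric])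
  then have "((c / (u - v) + b / (u - w)) + (a / (v - w) + c / (v - u)) - 2 * (b / (w - u) + a / (w - v))) / sqrt 6
      = 3 * (b / (u - w) + a / (v - w)) / (sqrt 2 * sqrt 3)"
    by (simp add: divide_diff_swap[of c v u] divide_diff_swap[of b w u] divide_diff_swap[of a w v])
  also have "\<dots> = sqrt 3 * ((b / (u - w) + a / (v - w)) / sqrt 2)"
    by (simp add: divide_simps)
  also have "\<dots> = sqrt 3 * (b / (sqrt 2 * (u - w)) + a / (sqrt 2 * (v - w)))"
    by (simp add: add_divide_distrib mult.commute)
  finally show ?thesis .
qed

lemma has_real_derivative_ln_abs:
  fixes x :: real
  assumes "x \<noteq> 0"
  shows "((\<lambda>y. ln \<bar>y\<bar>) has_real_derivative 1 / x) (at x)"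
proof -
  have ln_abs_eq: "ln \<bar>y\<bar> = ln (y\<^sup>2) / 2" for y :: real
    using ln_realpow[of "\<bar>y\<bar>" 2] by (cases "y = 0") simp_all
  have "((\<lambda>y. ln (y\<^sup>2) / 2) has_real_derivative (1 / x\<^sup>2) * (2 * x) / 2) (at x)"
    using assms by (auto intro!: derivative_eq_intros)
  then show ?thesis
    using assms by (simp add: ln_abs_eq power2_eq_square)
qed

lemma has_real_derivative_ln_abs_comp:
  fixes f :: "real \<Rightarrow> real"
  assumes "(f has_real_derivative f') (at x)" and "f x \<noteq> 0" and "D = f' / f x"
  shows "((\<lambda>y. ln \<bar>f y\<bar>) has_real_derivative D) (at x)"
  using DERIV_chain2[OF has_real_derivative_ln_abs[OF assms(2)] assms(1)] assms(3) by simp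

lemma Ftilde_has_derivative_eta:
  assumes "e \<noteq> 0" "sqrt 3 * x + e \<noteq> 0" "sqrt 3 * x - e \<noteq> 0"
  shows "((\<lambda>e. Ftilde a b c e x) has_real_derivative
    c / e + b / (sqrt 3 * x + e) - a / (sqrt 3 * x - e)) (at e)"
  unfolding Ftilde_def using assms
  by (auto intro!: derivative_eq_intros has_real_derivative_ln_abs_comp)

lemma Ftilde_has_derivative_xi:
  assumes "sqrt 3 * x + e \<noteq> 0" "sqrt 3 * x - e \<noteq> 0"
  shows "((\<lambda>x. Ftilde a b c e x) has_real_derivative
    sqrt 3 * (b / (sqrt 3 * x + e) + a / (sqrt 3 * x - e))) (at x)"
  unfolding Ftilde_def using assms
  by (auto intro!: derivative_eq_intros has_real_derivative_ln_abs_comp simp: algebra_simps)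

theorem mainTheorem4:
  fixes a b c :: real and u v w :: "real \<Rightarrow> real" and I :: "real set"
  assumes I: "open I" "is_interval I"
    and distinct: "\<And>t. t \<in> I \<Longrightarrow> u t \<noteq> v t \<and> v t \<noteq> w t \<and> u t \<noteq> w t"
    and du: "\<And>t. t \<in> I \<Longrightarrow> (u has_real_derivative (c / (u t - v t) + b / (u t - w t))) (at t)"
    and dv: "\<And>t. t \<in> I \<Longrightarrow> (v has_real_derivative (a / (v t - w t) + c / (v t - u t))) (at t)"
    and dw: "\<And>t. t \<in> I \<Longrightarrow> (w has_real_derivative (b / (w t - u t) + a / (w t - v t))) (at t)"
  defines "\<zeta> \<equiv> (\<lambda>t. (u t + v t + w t) / sqrt 3)"
    and "\<eta> \<equiv> (\<lambda>t. (u t - v t) / sqrt 2)"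
    and "\<xi> \<equiv> (\<lambda>t. (u t + v t - 2 * w t) / sqrt 6)"
  shows "(\<forall>s\<in>I. \<forall>t\<in>I. \<zeta> s = \<zeta> t)
    \<and> (\<forall>t\<in>I.
         (\<eta> has_real_derivative
            (c / \<eta> t + b / (sqrt 3 * \<xi> t + \<eta> t) - a / (sqrt 3 * \<xi> t - \<eta> t))) (at t)
       \<and> (\<xi> has_real_derivative
            (sqrt 3 * (b / (sqrt 3 * \<xi> t + \<eta> t) + a / (sqrt 3 * \<xi> t - \<eta> t)))) (at t))
    \<and> (\<forall>t\<in>I.
         ((\<lambda>e. Ftilde a b c e (\<xi> t)) has_real_derivative
            (c / \<eta> t + b / (sqrt 3 * \<xi> t + \<eta> t) - a / (sqrt 3 * \<xi> t - \<eta> t))) (at (\<eta> t))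
       \<and> ((\<lambda>x. Ftilde a b c (\<eta> t) x) has_real_derivative
            (sqrt 3 * (b / (sqrt 3 * \<xi> t + \<eta> t) + a / (sqrt 3 * \<xi> t - \<eta> t)))) (at (\<xi> t)))"
proof -
  have combinations: "sqrt 3 * \<xi> t + \<eta> t = sqrt 2 * (u t - w t)"
    "sqrt 3 * \<xi> t - \<eta> t = sqrt 2 * (v t - w t)" for t
    unfolding \<xi>_def \<eta>_def by (fact jacobi_coordinates_combinations)+
  have "\<exists>k. \<forall>t\<in>I. \<zeta> t = k"
  proof (rule has_field_derivative_zero_constant)
    show "convex I" using I(2) by (simp add: is_interval_convex)
    fix t assume t: "t \<in> I"
    show "(\<zeta> has_real_derivative 0) (at t within I)"
      using DERIV_cdivide[OF DERIV_add[OF DERIV_add[OF du[OF t] dv[OF t]] dw[OF t]], of "sqrt 3"]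
      unfolding \<zeta>_def calogero_velocity_sum_zero by (simp add: has_field_derivative_at_within)
  qed
  moreover have "(\<eta> has_real_derivative
      (c / \<eta> t + b / (sqrt 3 * \<xi> t + \<eta> t) - a / (sqrt 3 * \<xi> t - \<eta> t))) (at t)"
    if t: "t \<in> I" for t
    using DERIV_cdivide[OF DERIV_diff[OF du[OF t] dv[OF t]], of "sqrt 2"]
    unfolding combinations unfolding \<eta>_def calogero_eta_velocity .
  moreover have "(\<xi> has_real_derivative
      (sqrt 3 * (b / (sqrt 3 * \<xi> t + \<eta> t) + a / (sqrt 3 * \<xi> t - \<eta> t)))) (at t)"
    if t: "t \<in> I" for t
    using DERIV_cdivide[OF DERIV_diff[OF DERIV_add[OF du[OF t] dv[OF t]] DERIV_cmult[OF dw[OF t], of 2]], of "sqrt 6"]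
    unfolding combinations unfolding \<xi>_def calogero_xi_velocity .
  moreover have "\<eta> t \<noteq> 0" "sqrt 3 * \<xi> t + \<eta> t \<noteq> 0" "sqrt 3 * \<xi> t - \<eta> t \<noteq> 0"
    if "t \<in> I" for t
    using distinct[OF that] unfolding combinations unfolding \<eta>_def by auto
  ultimately show ?thesis
    by (metis Ftilde_has_derivative_eta Ftilde_has_derivative_xi)
qed

end
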